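(* Let $\mathcal A,\mathcal B,\mathcal C$ be Polish spaces. Let $\mu\in\wp(\mathcal A\times\mathcal B)$ and $\{\nu_n\}_{n\in\mathbb N}\subset\wp(\mathcal A\times\mathcal C)$ with $\mu^{\mathcal A}=\nu_n^{\mathcal A}$ for all $n$. If $\nu_n\to\nu$ in the weak-* topology for some $\nu\in\wp(\mathcal A\times\mathcal C)$, then $\varphi(\mu,\nu_n)\to\varphi(\mu,\nu)$ in the weak-* topology of $\wp(\mathcal A\times\mathcal B\times\mathcal C)$, where for any $\mu'\in\wp(\mathcal A\times\mathcal B)$, $\nu'\in\wp(\mathcal A\times\mathcal C)$ with $\mu'^{\mathcal A}=\nu'^{\mathcal A}$, $\varphi(\mu',\nu')$ is the probability measure with $\varphi(\mu',\nu')(A\times B\times C)=\int_{A\times C}\mu'(B\mid a)\,\nu'(da,dc)$ for all Borel $A\subset\mathcal A$, $B\subset\mathcal B$, $C\subset\mathcal C$.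
   Context: $\wp(\mathcal X)$ denotes the Borel probability measures on a Polish space $\mathcal X$; the weak-* topology is the weakest topology making $\mu\mapsto\int f\,d\mu$ continuous for all bounded continuous $f$. For $\mu\in\wp(\mathcal A\times\mathcal B)$, $\mu^{\mathcal A}$ is its marginal on $\mathcal A$ and $\mu(\cdot\mid a)$ a regular conditional distribution on $\mathcal B$ given $a$. *)

theory Defs
  imports "HOL-Probability.Probability"
begin

definition borel_prob :: "'a::topological_space measure \<Rightarrow> bool" where
  "borel_prob M \<longleftrightarrow> prob_space M \<and> sets M = sets borel"

definition weak_star_conv :: "(nat \<Rightarrow> 'a::topological_space measure) \<Rightarrow> 'a measure \<Rightarrow> bool" where
  "weak_star_conv Ms M \<longleftrightarrow>
     (\<forall>f :: 'a \<Rightarrow> real. continuous_on UNIV f \<and> bounded (range f) \<longrightarrow>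
        (\<lambda>n. integral\<^sup>L (Ms n) f) \<longlonglongrightarrow> integral\<^sup>L M f)"

definition marg1 :: "('a::topological_space \<times> 'b::topological_space) measure \<Rightarrow> 'a measure" where
  "marg1 M = distr M borel fst"

definition regular_cond_distr ::
  "('a::topological_space \<times> 'b::topological_space) measure \<Rightarrow> ('a \<Rightarrow> 'b measure) \<Rightarrow> bool" where
  "regular_cond_distr \<mu> \<kappa> \<longleftrightarrow>
     (\<forall>a. borel_prob (\<kappa> a)) \<and>
     (\<forall>B\<in>sets borel. (\<lambda>a. measure (\<kappa> a) B) \<in> borel_measurable borel) \<and>
     (\<forall>A\<in>sets borel. \<forall>B\<in>sets borel.
        measure \<mu> (A \<times> B) = (\<integral>a\<in>A. measure (\<kappa> a) B \<partial>marg1 \<mu>))"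

text \<open>phi is the gluing phi(mu, nu) built from the conditional distribution kappa of mu:
  phi(A x B x C) = integral over A x C of kappa a B with respect to nu.\<close>
definition is_glue ::
  "('a \<Rightarrow> 'b::topological_space measure) \<Rightarrow> ('a::topological_space \<times> 'c::topological_space) measure
     \<Rightarrow> ('a \<times> 'b \<times> 'c) measure \<Rightarrow> bool" where
  "is_glue \<kappa> \<nu> \<phi> \<longleftrightarrow> borel_prob \<phi> \<and>
     (\<forall>A\<in>sets borel. \<forall>B\<in>sets borel. \<forall>C\<in>sets borel.
        measure \<phi> (A \<times> B \<times> C) = (\<integral>x\<in>A \<times> C. measure (\<kappa> (fst x)) B \<partial>\<nu>))"

end

theory Submission
  imports Defs
begin

text \<open>
  Regard \<open>\<phi>(\<mu>, \<nu>\<^sub>n)\<close> as a measure \<open>\<rho>\<^sub>n\<close> on \<open>(\<A> \<times> \<B>) \<times> \<C>\<close>. Weak-* convergence forces the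
  limit \<open>\<nu>\<close> to have the same \<open>\<A>\<close>-marginal as the \<open>\<nu>\<^sub>n\<close>, so all \<open>\<rho>\<^sub>n\<close> and the limit \<open>\<rho>\<close> have
  the fixed marginal \<open>\<mu>\<close> on \<open>\<A> \<times> \<B>\<close>. Along a fixed first marginal \<open>M\<close>, weak-* convergence
  upgrades to stable convergence: \<open>\<integral> g(x) u(y)\<close> converges for every \<open>g \<in> L\<^sup>1(M)\<close> and bounded
  continuous \<open>u\<close>, because such integrals depend \<open>L\<^sup>1(M)\<close>-continuously on \<open>g\<close>, uniformly in \<open>n\<close>.
  The gluing formula turns the integral of \<open>1\<^bsub>A \<times> B\<^esub>(a, b) u(c)\<close> against \<open>\<rho>\<^sub>n\<close> into the
  integral of \<open>1\<^bsub>A\<^esub>(a) \<mu>(B | a) u(c)\<close> against \<open>\<nu>\<^sub>n\<close>, so the \<open>\<rho>\<^sub>n\<close> converge stably as well.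
  Finally stable convergence implies weak-* convergence by a Portmanteau argument:
  \<open>lim inf \<integral> h d\<rho>\<^sub>n \<ge> \<integral> h d\<rho>\<close> first for indicators of boxes \<open>E \<times> O\<close> with \<open>E\<close> Borel and
  \<open>O\<close> open, then for open sets, then for nonnegative continuous \<open>h\<close>; applied to \<open>K + f\<close> and
  \<open>K - f\<close> this gives convergence of \<open>\<integral> f d\<rho>\<^sub>n\<close>.
\<close>

section \<open>Borel probability measures\<close>

instance prod :: (polish_space, polish_space) polish_space ..

lemma borel_probD:
  assumes "borel_prob M"
  shows "prob_space M" "sets M = sets borel" "space M = UNIV"
  using assms unfolding borel_prob_def by (auto dest: sets_eq_imp_space_eq)

lemma measurable_borel_prob:
  assumes "borel_prob M" "f \<in> measurable borel N"
  shows "f \<in> measurable M N"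
  using assms(2) measurable_cong_sets[OF borel_probD(2)[OF assms(1)] refl, of N] by simp

lemma integrable_borel_prob_bounded:
  fixes f :: "_ \<Rightarrow> real"
  assumes "borel_prob M" "f \<in> borel_measurable borel" "\<And>x. \<bar>f x\<bar> \<le> K"
  shows "integrable M f"
proof -
  interpret prob_space M using borel_probD[OF assms(1)] by simp
  show ?thesis
    by (rule integrable_const_bound[where B=K]) (use assms measurable_borel_prob in auto)
qed

lemma integral_indicator_borel_prob:
  "borel_prob M \<Longrightarrow> (\<integral>x. indicator A x \<partial>M) = measure M A"
  using borel_probD(3)[of M] by simp

lemma integral_const_borel_prob:
  assumes "borel_prob M"
  shows "(\<integral>x. c \<partial>M) = (c::real)"
proof -
  interpret prob_space M using borel_probD[OF assms] by simp
  show ?thesis by (simp add: prob_space)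
qed

lemma borel_prob_distr:
  assumes "borel_prob M" "f \<in> measurable borel borel"
  shows "borel_prob (distr M borel f)"
  unfolding borel_prob_def
  using prob_space.prob_space_distr[OF borel_probD(1)[OF assms(1)] measurable_borel_prob[OF assms]]
  by simp

lemma measurable_fst_borel:
  "fst \<in> measurable (borel :: ('a::second_countable_topology \<times> 'b::second_countable_topology) measure) borel"
  by (intro borel_measurable_continuous_onI continuous_intros)

lemma measurable_snd_borel:
  "snd \<in> measurable (borel :: ('a::second_countable_topology \<times> 'b::second_countable_topology) measure) borel"
  by (intro borel_measurable_continuous_onI continuous_intros)

lemma measurable_comp_fst_borel:
  "g \<in> measurable borel N \<Longrightarrow>
    (\<lambda>z. g (fst z)) \<in> measurable (borel :: ('a::second_countable_topology \<times> 'b::second_countable_topology) measure) N"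
  using measurable_compose[OF measurable_fst_borel] by blast

lemma measurable_comp_snd_borel:
  "g \<in> measurable borel N \<Longrightarrow>
    (\<lambda>z. g (snd z)) \<in> measurable (borel :: ('a::second_countable_topology \<times> 'b::second_countable_topology) measure) N"
  using measurable_compose[OF measurable_snd_borel] by blast

lemma borel_prob_marg1:
  fixes M :: "('a::second_countable_topology \<times> 'b::second_countable_topology) measure"
  shows "borel_prob M \<Longrightarrow> borel_prob (marg1 M)"
  unfolding marg1_def by (rule borel_prob_distr[OF _ measurable_fst_borel])

lemma integral_marg1:
  fixes M :: "('a::second_countable_topology \<times> 'b::second_countable_topology) measure"
    and g :: "'a \<Rightarrow> real"
  assumes "borel_prob M" "g \<in> borel_measurable borel"
  shows "(\<integral>x. g x \<partial>marg1 M) = (\<integral>z. g (fst z) \<partial>M)"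
  unfolding marg1_def
  by (rule integral_distr[OF measurable_borel_prob[OF assms(1) measurable_fst_borel] assms(2)])

lemma bounded_range_real_abs_le:
  "bounded (range (u::'a \<Rightarrow> real)) \<Longrightarrow> \<exists>K>0. \<forall>y. \<bar>u y\<bar> \<le> K"
  unfolding bounded_pos by auto

lemma abs_indicator_diff_le_1: "\<bar>indicator S x - indicator T x :: real\<bar> \<le> 1"
  by (simp add: indicator_def)

lemma tendsto_integral_bounded_convergence:
  fixes f :: "nat \<Rightarrow> 'a::topological_space \<Rightarrow> real"
  assumes "borel_prob M" "\<And>k. f k \<in> borel_measurable borel" "g \<in> borel_measurable borel"
    and "\<And>k x. \<bar>f k x\<bar> \<le> K" "\<And>x. (\<lambda>k. f k x) \<longlonglongrightarrow> g x"
  shows "(\<lambda>k. \<integral>x. f k x \<partial>M) \<longlonglongrightarrow> (\<integral>x. g x \<partial>M)"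
proof (rule integral_dominated_convergence[where w="\<lambda>_. K"])
  show "integrable M (\<lambda>_. K)"
    using assms(4) by (intro integrable_borel_prob_bounded[OF assms(1)]) fastforce+
  show "f k \<in> borel_measurable M" for k by (rule measurable_borel_prob[OF assms(1,2)])
  show "g \<in> borel_measurable M" by (rule measurable_borel_prob[OF assms(1,3)])
qed (use assms in auto)

lemma open_indicator_continuous_approx:
  fixes U :: "'a::metric_space set"
  assumes "open U"
  obtains g :: "nat \<Rightarrow> 'a \<Rightarrow> real"
  where "\<And>k. continuous_on UNIV (g k)" "\<And>k x. 0 \<le> g k x" "\<And>k x. g k x \<le> indicator U x"
    and "\<And>k x. \<bar>g k x\<bar> \<le> 1" "\<And>x. (\<lambda>k. g k x) \<longlonglongrightarrow> indicator U x"
proof (cases "U = UNIV")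
  case True
  then show ?thesis by (intro that[of "\<lambda>k x. 1"]) auto
next
  case False
  define g where "g k x = min 1 (real k * infdist x (-U))" for k x
  have closed: "closed (-U)" "-U \<noteq> {}" using assms False by auto
  have "(\<lambda>k. g k x) \<longlonglongrightarrow> indicator U x" for x
  proof (cases "x \<in> U")
    case True
    then have pos: "infdist x (-U) > 0" using infdist_pos_not_in_closed[OF closed] by auto
    obtain N :: nat where N: "1 / infdist x (-U) < N" using reals_Archimedean2 by blast
    have "eventually (\<lambda>k. g k x = 1) sequentially"
    proof (rule eventually_sequentiallyI[of N])
      fix k assume "N \<le> k"
      then have "1 / infdist x (-U) < k" using N by linarith
      then have "1 \<le> real k * infdist x (-U)" using pos by (simp add: field_simps)
      then show "g k x = 1" by (simp add: g_def)
    qed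
    then show ?thesis using True by (simp add: tendsto_eventually)
  qed (simp add: g_def infdist_zero)
  moreover have "0 \<le> g k x \<and> g k x \<le> indicator U x" for k x
    by (cases "x \<in> U") (auto simp: g_def infdist_nonneg infdist_zero)
  moreover have "continuous_on UNIV (g k)" for k
    unfolding g_def by (intro continuous_intros continuous_on_infdist)
  ultimately show ?thesis
    by (intro that[of g]) (auto simp: abs_le_iff intro: order_trans[OF _ indicator_le_1])
qed

section \<open>Stable convergence along a fixed marginal\<close>

definition stable_conv_for ::
  "(nat \<Rightarrow> ('x::topological_space \<times> 'y::topological_space) measure) \<Rightarrow> ('x \<times> 'y) measure
     \<Rightarrow> ('x \<Rightarrow> real) \<Rightarrow> bool" where
  "stable_conv_for \<rho>s \<rho> g \<longleftrightarrow> (\<forall>u::'y \<Rightarrow> real. continuous_on UNIV u \<and> bounded (range u) \<longrightarrow>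
     (\<lambda>n. \<integral>z. g (fst z) * u (snd z) \<partial>\<rho>s n) \<longlonglongrightarrow> (\<integral>z. g (fst z) * u (snd z) \<partial>\<rho>))"

lemma integrable_fst_times:
  fixes g :: "'x::second_countable_topology \<Rightarrow> real" and u :: "'y::second_countable_topology \<Rightarrow> real"
  assumes N: "borel_prob (N :: ('x \<times> 'y) measure)" and g: "integrable (marg1 N) g"
    and u: "u \<in> borel_measurable borel" "\<And>y. \<bar>u y\<bar> \<le> K"
  shows "integrable N (\<lambda>z. g (fst z) * u (snd z))"
proof -
  have gm: "g \<in> borel_measurable borel"
    using g measurable_cong_sets[of "marg1 N" borel] unfolding marg1_def by auto
  have "integrable N (\<lambda>z. g (fst z))"
    using g unfolding marg1_def integrable_distr_eq[OF measurable_borel_prob[OF N measurable_fst_borel] gm] .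
  then show ?thesis
  proof (rule Bochner_Integration.integrable_bound[where f="\<lambda>z. K * g (fst z)", OF integrable_mult_right])
    show "(\<lambda>z. g (fst z) * u (snd z)) \<in> borel_measurable N"
      using gm u(1)
      by (intro measurable_borel_prob[OF N] borel_measurable_times measurable_comp_fst_borel measurable_comp_snd_borel)
    have "0 \<le> K" using u(2)[of undefined] by linarith
    then show "AE z in N. norm (g (fst z) * u (snd z)) \<le> norm (K * g (fst z))"
      using u(2) by (intro AE_I2) (simp add: abs_mult mult.commute[of K] mult_left_mono)
  qed
qed

lemma integral_fst_times_diff_le:
  fixes g g' :: "'x::second_countable_topology \<Rightarrow> real" and u :: "'y::second_countable_topology \<Rightarrow> real"
  assumes N: "borel_prob (N :: ('x \<times> 'y) measure)"
    and g: "integrable (marg1 N) g" "integrable (marg1 N) g'"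
    and u: "u \<in> borel_measurable borel" "\<And>y. \<bar>u y\<bar> \<le> K"
  shows "\<bar>(\<integral>z. g (fst z) * u (snd z) \<partial>N) - (\<integral>z. g' (fst z) * u (snd z) \<partial>N)\<bar>
           \<le> K * (\<integral>x. \<bar>g x - g' x\<bar> \<partial>marg1 N)"
proof -
  have diff: "integrable (marg1 N) (\<lambda>x. \<bar>g x - g' x\<bar>)" using g by auto
  have "(\<integral>z. g (fst z) * u (snd z) \<partial>N) - (\<integral>z. g' (fst z) * u (snd z) \<partial>N)
      = (\<integral>z. (g (fst z) - g' (fst z)) * u (snd z) \<partial>N)"
    using integrable_fst_times[OF N g(1) u] integrable_fst_times[OF N g(2) u]
    by (simp add: left_diff_distrib)
  also have "\<bar>\<dots>\<bar> \<le> (\<integral>z. \<bar>g (fst z) - g' (fst z)\<bar> * K \<partial>N)"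
  proof (rule order_trans[OF integral_abs_bound integral_mono])
    show "integrable N (\<lambda>z. \<bar>(g (fst z) - g' (fst z)) * u (snd z)\<bar>)"
      using integrable_abs[OF integrable_fst_times[OF N diff u]] by (simp add: abs_mult)
    show "integrable N (\<lambda>z. \<bar>g (fst z) - g' (fst z)\<bar> * K)"
      using integrable_fst_times[OF N diff, of "\<lambda>_. K" "\<bar>K\<bar>"] by simp
  qed (use u(2) in \<open>simp add: abs_mult mult_left_mono\<close>)
  also have "\<dots> = K * (\<integral>x. \<bar>g x - g' x\<bar> \<partial>marg1 N)"
    using integral_marg1[OF N, of "\<lambda>x. \<bar>g x - g' x\<bar>"] diff measurable_cong_sets[of "marg1 N" borel]
    unfolding marg1_def by (auto simp: mult.commute)
  finally show ?thesis .
qed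

lemma stable_conv_for_continuous:
  fixes \<rho>s :: "nat \<Rightarrow> ('x::topological_space \<times> 'y::topological_space) measure"
    and g :: "'x \<Rightarrow> real"
  assumes "weak_star_conv \<rho>s \<rho>" "continuous_on UNIV g" "bounded (range g)"
  shows "stable_conv_for \<rho>s \<rho> g"
  unfolding stable_conv_for_def
proof (intro allI impI)
  fix u :: "'y \<Rightarrow> real" assume u: "continuous_on UNIV u \<and> bounded (range u)"
  obtain K1 where K1: "\<And>x. \<bar>g x\<bar> \<le> K1" using assms(3) bounded_range_real_abs_le by blast
  obtain K2 where K2: "\<And>y. \<bar>u y\<bar> \<le> K2" using u bounded_range_real_abs_le by blast
  have "continuous_on UNIV (\<lambda>z::'x \<times> 'y. g (fst z))"
    by (rule continuous_on_compose2[OF assms(2) continuous_on_fst[OF continuous_on_id]]) auto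
  moreover have "continuous_on UNIV (\<lambda>z::'x \<times> 'y. u (snd z))"
    using u by (intro continuous_on_compose2[OF _ continuous_on_snd[OF continuous_on_id]]) auto
  ultimately have "continuous_on UNIV (\<lambda>z. g (fst z) * u (snd z))"
    by (rule continuous_on_mult)
  moreover have "\<bar>g (fst z) * u (snd z)\<bar> \<le> K1 * K2" for z
    unfolding abs_mult using K1[of undefined] by (intro mult_mono K1 K2) auto
  then have "bounded (range (\<lambda>z. g (fst z) * u (snd z)))"
    by (intro boundedI[where B="K1 * K2"]) auto
  ultimately show "(\<lambda>n. \<integral>z. g (fst z) * u (snd z) \<partial>\<rho>s n) \<longlonglongrightarrow> (\<integral>z. g (fst z) * u (snd z) \<partial>\<rho>)"
    using assms(1) unfolding weak_star_conv_def by blast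
qed

locale fixed_marginal =
  fixes \<rho>s :: "nat \<Rightarrow> ('x::polish_space \<times> 'y::polish_space) measure" and \<rho> :: "('x \<times> 'y) measure"
    and M :: "'x measure"
  assumes borel_prob_seq: "\<And>n. borel_prob (\<rho>s n)" and borel_prob_lim: "borel_prob \<rho>"
    and marg1_seq: "\<And>n. marg1 (\<rho>s n) = M" and marg1_lim: "marg1 \<rho> = M"
begin

lemma borel_prob_M: "borel_prob M"
  using borel_prob_marg1[OF borel_prob_lim] marg1_lim by simp

lemma integrable_M_bounded: "(g :: 'x \<Rightarrow> real) \<in> borel_measurable borel \<Longrightarrow> (\<And>x. \<bar>g x\<bar> \<le> K) \<Longrightarrow> integrable M g"
  by (rule integrable_borel_prob_bounded[OF borel_prob_M])

lemma integrable_M_indicator: "A \<in> sets borel \<Longrightarrow> integrable M (indicator A :: _ \<Rightarrow> real)"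
  by (rule integrable_M_bounded[where K=1]) (auto split: split_indicator)

text \<open>The marginal being fixed, an \<open>L\<^sup>1(M)\<close>-approximation of \<open>g\<close> perturbs all the integrals
  in the definition of stable convergence uniformly in \<open>n\<close>.\<close>
lemma stable_conv_for_L1_approx:
  assumes g: "integrable M g"
    and approx: "\<And>e. e > 0 \<Longrightarrow> \<exists>g'. integrable M g' \<and> stable_conv_for \<rho>s \<rho> g' \<and> (\<integral>x. \<bar>g x - g' x\<bar> \<partial>M) < e"
  shows "stable_conv_for \<rho>s \<rho> g"
  unfolding stable_conv_for_def
proof (intro allI impI)
  fix u :: "'y \<Rightarrow> real" assume u: "continuous_on UNIV u \<and> bounded (range u)"
  then obtain K where K: "K > 0" "\<And>y. \<bar>u y\<bar> \<le> K"
    using bounded_range_real_abs_le by blast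
  have um: "u \<in> borel_measurable borel" using u borel_measurable_continuous_onI by blast
  let ?I = "\<lambda>N g. \<integral>z. g (fst z) * u (snd z) \<partial>N"
  show "(\<lambda>n. ?I (\<rho>s n) g) \<longlonglongrightarrow> ?I \<rho> g"
    unfolding tendsto_iff
  proof (intro allI impI)
    fix e :: real assume e: "e > 0"
    obtain g' where g': "integrable M g'" "stable_conv_for \<rho>s \<rho> g'" "(\<integral>x. \<bar>g x - g' x\<bar> \<partial>M) < e / (3 * K)"
      using approx[of "e / (3 * K)"] e K by auto
    have close: "\<bar>?I N g - ?I N g'\<bar> < e / 3" if "borel_prob N" "marg1 N = M" for N
    proof -
      have "K * (\<integral>x. \<bar>g x - g' x\<bar> \<partial>M) < e / 3"
        using g'(3) K(1) by (simp add: field_simps)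
      then show ?thesis
        using integral_fst_times_diff_le[OF that(1), of g g' u K] that(2) g g'(1) um K(2) by simp
    qed
    have "(\<lambda>n. ?I (\<rho>s n) g') \<longlonglongrightarrow> ?I \<rho> g'"
      using g'(2) u unfolding stable_conv_for_def by blast
    then have "eventually (\<lambda>n. dist (?I (\<rho>s n) g') (?I \<rho> g') < e / 3) sequentially"
      by (rule tendstoD) (simp add: e)
    then show "eventually (\<lambda>n. dist (?I (\<rho>s n) g) (?I \<rho> g) < e) sequentially"
    proof eventually_elim
      case (elim n)
      then show ?case
        using close[OF borel_prob_seq marg1_seq, of n] close[OF borel_prob_lim marg1_lim]
        unfolding dist_real_def abs_less_iff by linarith
    qed
  qed
qed

lemma stable_conv_for_add:
  assumes "stable_conv_for \<rho>s \<rho> g" "stable_conv_for \<rho>s \<rho> h" "integrable M g" "integrable M h"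
  shows "stable_conv_for \<rho>s \<rho> (\<lambda>x. g x + h x)"
  unfolding stable_conv_for_def
proof (intro allI impI)
  fix u :: "'y \<Rightarrow> real" assume u: "continuous_on UNIV u \<and> bounded (range u)"
  then obtain K where K: "\<And>y. \<bar>u y\<bar> \<le> K"
    using bounded_range_real_abs_le by blast
  have um: "u \<in> borel_measurable borel" using u borel_measurable_continuous_onI by blast
  have split: "(\<integral>z. (g (fst z) + h (fst z)) * u (snd z) \<partial>N)
      = (\<integral>z. g (fst z) * u (snd z) \<partial>N) + (\<integral>z. h (fst z) * u (snd z) \<partial>N)"
    if "borel_prob N" "marg1 N = M" for N
    using integrable_fst_times[OF that(1) _ um K] assms(3,4) that(2) by (simp add: distrib_right)
  show "(\<lambda>n. \<integral>z. (g (fst z) + h (fst z)) * u (snd z) \<partial>\<rho>s n) \<longlonglongrightarrow> (\<integral>z. (g (fst z) + h (fst z)) * u (snd z) \<partial>\<rho>)"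
    unfolding split[OF borel_prob_seq marg1_seq] split[OF borel_prob_lim marg1_lim]
    using assms(1,2) u unfolding stable_conv_for_def by (intro tendsto_add) auto
qed

lemma stable_conv_for_cmult: "stable_conv_for \<rho>s \<rho> g \<Longrightarrow> stable_conv_for \<rho>s \<rho> (\<lambda>x. c * g x)"
  unfolding stable_conv_for_def by (auto simp: mult.assoc intro!: tendsto_mult_left)

lemma stable_conv_for_sum:
  assumes "finite I" "\<And>i. i \<in> I \<Longrightarrow> stable_conv_for \<rho>s \<rho> (f i)" "\<And>i. i \<in> I \<Longrightarrow> integrable M (f i)"
  shows "stable_conv_for \<rho>s \<rho> (\<lambda>x. \<Sum>i\<in>I. f i x)"
  using assms
proof (induction I rule: finite_induct)
  case empty
  then show ?case by (simp add: stable_conv_for_def)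
next
  case (insert i I)
  then show ?case by (simp add: stable_conv_for_add)
qed

lemma stable_conv_for_dominated_limit:
  assumes g: "integrable M g"
    and s: "\<And>k. integrable M (s k)" "\<And>k. stable_conv_for \<rho>s \<rho> (s k)" "\<And>x. (\<lambda>k. s k x) \<longlonglongrightarrow> g x"
    and w: "integrable M w" "\<And>k x. \<bar>g x - s k x\<bar> \<le> w x"
  shows "stable_conv_for \<rho>s \<rho> g"
proof (rule stable_conv_for_L1_approx[OF g])
  have "(\<lambda>k. \<integral>x. \<bar>g x - s k x\<bar> \<partial>M) \<longlonglongrightarrow> (\<integral>x. 0 \<partial>M)"
  proof (rule integral_dominated_convergence[OF _ _ w(1)])
    show "AE x in M. (\<lambda>k. \<bar>g x - s k x\<bar>) \<longlonglongrightarrow> 0"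
    proof (rule AE_I2)
      fix x
      show "(\<lambda>k. \<bar>g x - s k x\<bar>) \<longlonglongrightarrow> 0"
        using tendsto_rabs[OF tendsto_diff[OF tendsto_const[of "g x"] s(3)[of x]]] by simp
    qed
    show "(\<lambda>x. \<bar>g x - s k x\<bar>) \<in> borel_measurable M" for k
      using g s(1)[of k] by measurable
    show "AE x in M. norm \<bar>g x - s k x\<bar> \<le> w x" for k
      using w(2) by simp
  qed simp
  then have L1: "(\<lambda>k. \<integral>x. \<bar>g x - s k x\<bar> \<partial>M) \<longlonglongrightarrow> 0" by simp
  fix e :: real assume "e > 0"
  then obtain k where "(\<integral>x. \<bar>g x - s k x\<bar> \<partial>M) < e"
    using L1[THEN tendstoD, of e] by (auto simp: eventually_sequentially)
  then show "\<exists>g'. integrable M g' \<and> stable_conv_for \<rho>s \<rho> g' \<and> (\<integral>x. \<bar>g x - g' x\<bar> \<partial>M) < e"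
    using s(1,2) by blast
qed

lemma stable_conv_for_open:
  assumes "weak_star_conv \<rho>s \<rho>" "open U"
  shows "stable_conv_for \<rho>s \<rho> (indicator U)"
proof -
  obtain g :: "nat \<Rightarrow> 'x \<Rightarrow> real" where g: "\<And>k. continuous_on UNIV (g k)" "\<And>k x. \<bar>g k x\<bar> \<le> 1"
    "\<And>k x. 0 \<le> g k x" "\<And>k x. g k x \<le> indicator U x" "\<And>x. (\<lambda>k. g k x) \<longlonglongrightarrow> indicator U x"
    using open_indicator_continuous_approx[OF assms(2)] by metis
  have bounded: "bounded (range (g k))" for k
    using g(2) by (intro boundedI[where B=1]) auto
  show ?thesis
  proof (rule stable_conv_for_dominated_limit[where s=g and w="\<lambda>_. 1"])
    show "integrable M (g k)" for k
      using g(1,2) by (intro integrable_M_bounded[where K=1] borel_measurable_continuous_onI)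
    show "\<bar>indicator U x - g k x\<bar> \<le> 1" for k x
      using g(3,4)[of k x] by (cases "x \<in> U") auto
    show "stable_conv_for \<rho>s \<rho> (g k)" for k
      by (rule stable_conv_for_continuous[OF assms(1) g(1) bounded])
    show "integrable M (indicator U :: 'x \<Rightarrow> real)"
      using assms(2) by (intro integrable_M_indicator) simp
    show "integrable M (\<lambda>_. 1 :: real)"
      by (rule integrable_M_bounded[where K=1]) auto
  qed (rule g(5))
qed

lemma stable_conv_for_sets:
  assumes G: "Int_stable G" "sets (borel::'x measure) = sigma_sets UNIV G" "UNIV \<in> G"
    and stable: "\<And>E. E \<in> G \<Longrightarrow> stable_conv_for \<rho>s \<rho> (indicator E)"
    and E: "E \<in> sets borel"
  shows "stable_conv_for \<rho>s \<rho> (indicator E)"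
proof -
  have "E \<in> sigma_sets UNIV G" using E G(2) by simp
  with G(1) subset_UNIV[of G, unfolded Pow_UNIV[symmetric]] show ?thesis
  proof (induction rule: sigma_sets_induct_disjoint)
    case (basic A)
    then show ?case using stable by simp
  next
    case empty
    then show ?case by (simp add: stable_conv_for_def)
  next
    case (compl A)
    have "stable_conv_for \<rho>s \<rho> (\<lambda>x. indicator UNIV x + (- 1) * indicator A x)"
      using stable[OF G(3)] compl G(2) integrable_M_indicator integrable_M_bounded[of "\<lambda>_. 1" 1]
      by (intro stable_conv_for_add stable_conv_for_cmult) auto
    moreover have "(\<lambda>x. indicator UNIV x + (- 1) * indicator A x :: real) = indicator (UNIV - A)"
      by (auto split: split_indicator)
    ultimately show ?case by simp
  next
    case (union A)
    have A: "A i \<in> sets borel" for i using union(2) G(2) by auto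
    have finite_union: "indicator (\<Union>i<k. A i) = (\<lambda>x. \<Sum>i<k. indicator (A i) x :: real)" for k
      by (intro ext indicator_UN_disjoint finite_lessThan disjoint_family_on_mono[OF subset_UNIV union(1)])
    show ?case
    proof (rule stable_conv_for_dominated_limit[where s="\<lambda>k. indicator (\<Union>i<k. A i)" and w="\<lambda>_. 1"])
      show "stable_conv_for \<rho>s \<rho> (indicator (\<Union>i<k. A i))" for k
        unfolding finite_union using union(3) A integrable_M_indicator by (intro stable_conv_for_sum) auto
      show "(\<lambda>k. indicator (\<Union>i<k. A i) x) \<longlonglongrightarrow> (indicator (\<Union>i. A i) x :: real)" for x
        by (rule LIMSEQ_indicator_UN)
      show "integrable M (\<lambda>_. 1 :: real)"
        by (rule integrable_M_bounded[where K=1]) auto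
      show "\<bar>indicator (\<Union>i. A i) x - indicator (\<Union>i<k. A i) x\<bar> \<le> (1::real)" for k x
        by (rule abs_indicator_diff_le_1)
      show "integrable M (indicator (\<Union>i<k. A i) :: 'x \<Rightarrow> real)" for k
        by (intro integrable_M_indicator sets.finite_UN finite_lessThan A)
      show "integrable M (indicator (\<Union>i. A i) :: 'x \<Rightarrow> real)"
        by (intro integrable_M_indicator sets.countable_nat_UN) (simp add: A image_subset_iff)
    qed
  qed
qed

lemma stable_conv_for_integrable:
  assumes stable: "\<And>E. E \<in> sets borel \<Longrightarrow> stable_conv_for \<rho>s \<rho> (indicator E)" and f: "integrable M f"
  shows "stable_conv_for \<rho>s \<rho> f"
  using f
proof (induct rule: integrable_induct)
  case (base A c)
  then have "A \<in> sets borel" by (simp add: borel_probD(2)[OF borel_prob_M])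
  then have "stable_conv_for \<rho>s \<rho> (\<lambda>x. c * indicator A x)"
    by (rule stable_conv_for_cmult[OF stable])
  then show ?case by (simp add: mult.commute)
next
  case (add f g)
  then show ?case by (blast intro: stable_conv_for_add)
next
  case (lim f s)
  show ?case
  proof (rule stable_conv_for_dominated_limit[where s=s and w="\<lambda>x. 3 * \<bar>f x\<bar>"])
    show "\<bar>f x - s i x\<bar> \<le> 3 * \<bar>f x\<bar>" for i x
    proof -
      have "\<bar>s i x\<bar> \<le> 2 * \<bar>f x\<bar>" using lim by (simp add: borel_probD(3)[OF borel_prob_M])
      then show ?thesis using abs_triangle_ineq4[of "f x" "s i x"] by linarith
    qed
    show "(\<lambda>i. s i x) \<longlonglongrightarrow> f x" for x
      using lim by (simp add: borel_probD(3)[OF borel_prob_M])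
  qed (use lim in simp_all)
qed

lemma stable_conv_for_integrable_if_weak_star_conv:
  assumes "weak_star_conv \<rho>s \<rho>" "integrable M g"
  shows "stable_conv_for \<rho>s \<rho> g"
proof (rule stable_conv_for_integrable[OF _ assms(2)])
  fix E :: "'x set" assume "E \<in> sets borel"
  then show "stable_conv_for \<rho>s \<rho> (indicator E)"
  proof (rule stable_conv_for_sets[where G="{S. open S}", OF _ sets_borel, rotated -1])
    show "Int_stable {S::'x set. open S}" by (auto simp: Int_stable_def)
  qed (simp_all add: stable_conv_for_open[OF assms(1)])
qed

end

section \<open>Stable convergence implies weak-* convergence\<close>

definition liminf_integral_ge :: "(nat \<Rightarrow> 'z measure) \<Rightarrow> 'z measure \<Rightarrow> ('z \<Rightarrow> real) \<Rightarrow> bool" where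
  "liminf_integral_ge \<rho>s \<rho> f \<longleftrightarrow> (\<forall>n. integrable (\<rho>s n) f) \<and> integrable \<rho> f \<and>
     (\<forall>e>0. eventually (\<lambda>n. (\<integral>z. f z \<partial>\<rho>s n) > (\<integral>z. f z \<partial>\<rho>) - e) sequentially)"

lemma liminf_integral_ge_if_tendsto:
  assumes "\<And>n. integrable (\<rho>s n) f" "integrable \<rho> f" "(\<lambda>n. \<integral>z. f z \<partial>\<rho>s n) \<longlonglongrightarrow> (\<integral>z. f z \<partial>\<rho>)"
  shows "liminf_integral_ge \<rho>s \<rho> f"
  unfolding liminf_integral_ge_def
proof (intro conjI allI impI assms(1,2))
  fix e :: real assume "e > 0"
  with assms(3) show "eventually (\<lambda>n. (\<integral>z. f z \<partial>\<rho>s n) > (\<integral>z. f z \<partial>\<rho>) - e) sequentially"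
    by (rule eventually_mono[OF tendstoD]) (simp_all add: dist_real_def)
qed

lemma liminf_integral_ge_add:
  assumes "liminf_integral_ge \<rho>s \<rho> f" "liminf_integral_ge \<rho>s \<rho> g"
  shows "liminf_integral_ge \<rho>s \<rho> (\<lambda>z. f z + g z)"
  unfolding liminf_integral_ge_def
proof (intro conjI allI impI)
  show "integrable (\<rho>s n) (\<lambda>z. f z + g z)" for n using assms unfolding liminf_integral_ge_def by auto
  show "integrable \<rho> (\<lambda>z. f z + g z)" using assms unfolding liminf_integral_ge_def by auto
  fix e :: real assume "e > 0"
  then have "eventually (\<lambda>n. (\<integral>z. f z \<partial>\<rho>s n) > (\<integral>z. f z \<partial>\<rho>) - e/2) sequentially"
    "eventually (\<lambda>n. (\<integral>z. g z \<partial>\<rho>s n) > (\<integral>z. g z \<partial>\<rho>) - e/2) sequentially"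
    using assms unfolding liminf_integral_ge_def by auto
  then show "eventually (\<lambda>n. (\<integral>z. f z + g z \<partial>\<rho>s n) > (\<integral>z. f z + g z \<partial>\<rho>) - e) sequentially"
    by eventually_elim (use assms in \<open>simp add: liminf_integral_ge_def\<close>)
qed

lemma liminf_integral_ge_cmult:
  assumes "liminf_integral_ge \<rho>s \<rho> f" "c > 0"
  shows "liminf_integral_ge \<rho>s \<rho> (\<lambda>z. c * f z)"
  unfolding liminf_integral_ge_def
proof (intro conjI allI impI)
  show "integrable (\<rho>s n) (\<lambda>z. c * f z)" for n using assms unfolding liminf_integral_ge_def by auto
  show "integrable \<rho> (\<lambda>z. c * f z)" using assms unfolding liminf_integral_ge_def by auto
  fix e :: real assume "e > 0"
  then have "eventually (\<lambda>n. (\<integral>z. f z \<partial>\<rho>s n) > (\<integral>z. f z \<partial>\<rho>) - e / c) sequentially"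
    using assms unfolding liminf_integral_ge_def by auto
  then show "eventually (\<lambda>n. (\<integral>z. c * f z \<partial>\<rho>s n) > (\<integral>z. c * f z \<partial>\<rho>) - e) sequentially"
  proof eventually_elim
    case (elim n)
    then have "c * (\<integral>z. f z \<partial>\<rho>s n) > c * ((\<integral>z. f z \<partial>\<rho>) - e / c)"
      using assms(2) by (intro mult_strict_left_mono) auto
    then show ?case using assms(2) by (simp add: right_diff_distrib)
  qed
qed

lemma liminf_integral_ge_sum:
  assumes "finite I" "\<And>i. i \<in> I \<Longrightarrow> liminf_integral_ge \<rho>s \<rho> (f i)"
  shows "liminf_integral_ge \<rho>s \<rho> (\<lambda>z. \<Sum>i\<in>I. f i z)"
  using assms
proof (induction I rule: finite_induct)
  case empty
  then show ?case by (simp add: liminf_integral_ge_def)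
next
  case (insert i I)
  then show ?case by (simp add: liminf_integral_ge_add)
qed

lemma liminf_integral_ge_approx_below:
  assumes "\<And>n. integrable (\<rho>s n) f" "integrable \<rho> f"
    and approx: "\<And>e. e > 0 \<Longrightarrow> \<exists>s. liminf_integral_ge \<rho>s \<rho> s \<and>
        (\<forall>n. (\<integral>z. s z \<partial>\<rho>s n) \<le> (\<integral>z. f z \<partial>\<rho>s n)) \<and> (\<integral>z. f z \<partial>\<rho>) - e < (\<integral>z. s z \<partial>\<rho>)"
  shows "liminf_integral_ge \<rho>s \<rho> f"
  unfolding liminf_integral_ge_def
proof (intro conjI allI impI assms(1,2))
  fix e :: real assume "e > 0"
  then obtain s where s: "liminf_integral_ge \<rho>s \<rho> s" "\<And>n. (\<integral>z. s z \<partial>\<rho>s n) \<le> (\<integral>z. f z \<partial>\<rho>s n)"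
    "(\<integral>z. f z \<partial>\<rho>) - e/2 < (\<integral>z. s z \<partial>\<rho>)"
    using approx[of "e/2"] by auto
  have "eventually (\<lambda>n. (\<integral>z. s z \<partial>\<rho>s n) > (\<integral>z. s z \<partial>\<rho>) - e/2) sequentially"
    using s(1) \<open>e > 0\<close> unfolding liminf_integral_ge_def by auto
  then show "eventually (\<lambda>n. (\<integral>z. f z \<partial>\<rho>s n) > (\<integral>z. f z \<partial>\<rho>) - e) sequentially"
  proof eventually_elim
    case (elim n)
    have "(\<integral>z. s z \<partial>\<rho>s n) \<le> (\<integral>z. f z \<partial>\<rho>s n)" by (rule s(2))
    with elim s(3) show ?case by linarith
  qed
qed

lemma open_prod_eq_UN_Times:
  fixes U :: "('x::second_countable_topology \<times> 'y::second_countable_topology) set"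
  assumes "open U"
  obtains V :: "nat \<Rightarrow> 'x set" and Q :: "nat \<Rightarrow> 'y set"
  where "\<And>i. open (V i)" "\<And>i. open (Q i)" "U = (\<Union>i. V i \<times> Q i)"
proof -
  obtain BX :: "'x set set" where BX: "countable BX" "topological_basis BX" using ex_countable_basis by blast
  obtain BY :: "'y set set" where BY: "countable BY" "topological_basis BY" using ex_countable_basis by blast
  \<comment> \<open>the empty box makes the index set nonempty without changing the union\<close>
  define P where "P = insert ({}, {}) {(a, b). a \<in> BX \<and> b \<in> BY \<and> a \<times> b \<subseteq> U}"
  have "P \<subseteq> insert ({}, {}) (BX \<times> BY)" unfolding P_def by blast
  then have "countable P"
    by (rule countable_subset) (simp add: BX(1) BY(1))
  moreover have "P \<noteq> {}" by (simp add: P_def)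
  ultimately have range: "range (from_nat_into P) = P"
    by (intro range_from_nat_into)
  have "open (fst p) \<and> open (snd p)" if "p \<in> P" for p
    using that topological_basis_open[OF BX(2)] topological_basis_open[OF BY(2)] unfolding P_def by auto
  moreover have "from_nat_into P i \<in> P" for i
    using range by blast
  ultimately have "open (fst (from_nat_into P i))" "open (snd (from_nat_into P i))" for i
    by blast+
  moreover have "U = (\<Union>p\<in>P. fst p \<times> snd p)"
  proof
    show "U \<subseteq> (\<Union>p\<in>P. fst p \<times> snd p)"
    proof
      fix z assume "z \<in> U"
      then obtain W where "W \<in> (\<lambda>(a, b). a \<times> b) ` (BX \<times> BY)" "z \<in> W" "W \<subseteq> U"
        by (rule topological_basisE[OF topological_basis_prod[OF BX(2) BY(2)] assms])
      then obtain a b where "a \<in> BX" "b \<in> BY" "z \<in> a \<times> b" "a \<times> b \<subseteq> U"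
        by auto
      then show "z \<in> (\<Union>p\<in>P. fst p \<times> snd p)"
        by (intro UN_I[of "(a, b)"]) (auto simp: P_def)
    qed
    show "(\<Union>p\<in>P. fst p \<times> snd p) \<subseteq> U" unfolding P_def by auto
  qed
  then have "U = (\<Union>p\<in>range (from_nat_into P). fst p \<times> snd p)"
    by (simp only: range)
  then have "U = (\<Union>i. fst (from_nat_into P i) \<times> snd (from_nat_into P i))"
    by simp
  ultimately show ?thesis by (rule that)
qed

lemma staircase_approx:
  fixes k t :: real
  assumes k: "k > 0" and t: "0 \<le> t" "t \<le> real L / k"
  shows "t - 1 / k \<le> (\<Sum>j=1..L. if real j / k < t then 1 / k else 0)"
    and "(\<Sum>j=1..L. if real j / k < t then 1 / k else 0) \<le> t"
proof -
  let ?S = "\<lambda>L. \<Sum>j=1..L. if real j / k < t then 1 / k else (0::real)"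
  have "?S L \<le> t \<and> (real L / k < t \<longrightarrow> ?S L = real L / k) \<and> (t \<le> real L / k \<longrightarrow> t - 1 / k \<le> ?S L)" for L
  proof (induction L)
    case 0
    then show ?case using t(1) k by simp
  next
    case (Suc L)
    have step: "real (Suc L) / k = real L / k + 1 / k" by (simp add: add_divide_distrib)
    show ?case
    proof (cases "real (Suc L) / k < t")
      case True
      then have "real L / k < t" using step k by (smt (verit) divide_pos_pos)
      then show ?thesis using True Suc step by simp
    next
      case False
      then show ?thesis using Suc step by auto
    qed
  qed
  then show "t - 1 / k \<le> ?S L" "?S L \<le> t" using t(2) by auto
qed

locale stable_convergence =
  fixes \<rho>s :: "nat \<Rightarrow> ('x::polish_space \<times> 'y::polish_space) measure" and \<rho> :: "('x \<times> 'y) measure"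
  assumes borel_prob_seq: "\<And>n. borel_prob (\<rho>s n)" and borel_prob_lim: "borel_prob \<rho>"
    and stable_sets: "\<And>E. E \<in> sets borel \<Longrightarrow> stable_conv_for \<rho>s \<rho> (indicator E)"
begin

lemma integrable_bounded:
  fixes f :: "'x \<times> 'y \<Rightarrow> real"
  assumes "f \<in> borel_measurable borel" "\<And>z. \<bar>f z\<bar> \<le> K"
  shows "integrable (\<rho>s n) f" "integrable \<rho> f"
  using integrable_borel_prob_bounded[OF borel_prob_seq assms] integrable_borel_prob_bounded[OF borel_prob_lim assms]
  by auto

lemma liminf_integral_ge_box:
  assumes E: "E \<in> sets borel" and Op: "open Op"
  shows "liminf_integral_ge \<rho>s \<rho> (\<lambda>z. indicator E (fst z) * indicator Op (snd z))"
proof -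
  obtain g :: "nat \<Rightarrow> 'y \<Rightarrow> real" where g: "\<And>k. continuous_on UNIV (g k)" "\<And>k x. \<bar>g k x\<bar> \<le> 1"
    "\<And>k x. 0 \<le> g k x" "\<And>k x. g k x \<le> indicator Op x" "\<And>x. (\<lambda>k. g k x) \<longlonglongrightarrow> indicator Op x"
    using open_indicator_continuous_approx[OF Op] by metis
  let ?f = "\<lambda>z. indicator E (fst z) * indicator Op (snd z) :: real"
  let ?s = "\<lambda>k z. indicator E (fst z) * g k (snd z)"
  have E_fst: "(\<lambda>z::'x \<times> 'y. indicator E (fst z) :: real) \<in> borel_measurable borel"
    using E by (intro measurable_comp_fst_borel) simp
  have measurable: "?f \<in> borel_measurable borel" "?s k \<in> borel_measurable borel" for k
    using Op by (intro borel_measurable_times E_fst measurable_comp_snd_borel; simp)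
      (intro borel_measurable_times E_fst measurable_comp_snd_borel borel_measurable_continuous_onI g(1))
  have bounded: "\<bar>?f z\<bar> \<le> 1" "\<bar>?s k z\<bar> \<le> 1" for k z
    unfolding abs_mult by (intro mult_le_one abs_ge_zero g(2); simp add: indicator_def)+
  have lim: "(\<lambda>k. \<integral>z. ?s k z \<partial>\<rho>) \<longlonglongrightarrow> (\<integral>z. ?f z \<partial>\<rho>)"
    using g(5) by (intro tendsto_integral_bounded_convergence[OF borel_prob_lim measurable(2) measurable(1) bounded(2)] tendsto_intros)
  show ?thesis
  proof (rule liminf_integral_ge_approx_below)
    fix e :: real assume "e > 0"
    obtain k where "norm ((\<integral>z. ?s k z \<partial>\<rho>) - (\<integral>z. ?f z \<partial>\<rho>)) < e"
      using LIMSEQ_D[OF lim \<open>e > 0\<close>] by (blast intro: order_refl)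
    then have k: "(\<integral>z. ?f z \<partial>\<rho>) - e < (\<integral>z. ?s k z \<partial>\<rho>)"
      by (simp add: abs_less_iff)
    have "bounded (range (g k))" using g(2) by (intro boundedI[where B=1]) auto
    then have "(\<lambda>n. \<integral>z. ?s k z \<partial>\<rho>s n) \<longlonglongrightarrow> (\<integral>z. ?s k z \<partial>\<rho>)"
      using stable_sets[OF E] g(1) unfolding stable_conv_for_def by blast
    then have "liminf_integral_ge \<rho>s \<rho> (?s k)"
      by (intro liminf_integral_ge_if_tendsto integrable_bounded[OF measurable(2) bounded(2)])
    moreover have "(\<integral>z. ?s k z \<partial>\<rho>s n) \<le> (\<integral>z. ?f z \<partial>\<rho>s n)" for n
      by (rule integral_mono[OF integrable_bounded(1)[OF measurable(2) bounded(2)]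
            integrable_bounded(1)[OF measurable(1) bounded(1)]]) (simp add: g(4) mult_left_mono)
    ultimately show "\<exists>s. liminf_integral_ge \<rho>s \<rho> s \<and> (\<forall>n. (\<integral>z. s z \<partial>\<rho>s n) \<le> (\<integral>z. ?f z \<partial>\<rho>s n))
        \<and> (\<integral>z. ?f z \<partial>\<rho>) - e < (\<integral>z. s z \<partial>\<rho>)"
      using k by blast
  qed (fact integrable_bounded[OF measurable(1) bounded(1)])+
qed

text \<open>Splitting the first coordinate into the atoms of \<open>V 0, \<dots>, V (N - 1)\<close> writes the union as
  a disjoint sum of boxes \<open>E \<times> Q\<close> with \<open>E\<close> Borel and \<open>Q\<close> open.\<close>
lemma liminf_integral_ge_finite_union_boxes:
  fixes N :: nat
  assumes V: "\<And>i. open (V i)" and Q: "\<And>i. open (Q i)"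
  shows "liminf_integral_ge \<rho>s \<rho> (indicator (\<Union>i<N. V i \<times> Q i))"
proof -
  define atom where "atom J = {x. \<forall>i<N. x \<in> V i \<longleftrightarrow> i \<in> J}" for J
  have atom_borel: "atom J \<in> sets borel" for J
  proof -
    have "atom J = UNIV - (\<Union>i<N. if i \<in> J then - V i else V i)"
      unfolding atom_def by auto
    also have "\<dots> \<in> sets borel"
      using V by (intro sets.Diff sets.finite_UN) (auto intro: borel_open borel_closed simp: finite_lessThan)
    finally show ?thesis .
  qed
  have decomp: "indicator (\<Union>i<N. V i \<times> Q i)
      = (\<lambda>z. \<Sum>J\<in>Pow {..<N}. indicator (atom J) (fst z) * indicator (\<Union>i\<in>J. Q i) (snd z) :: real)"
  proof
    fix z :: "'x \<times> 'y"
    define J0 where "J0 = {i. i < N \<and> fst z \<in> V i}"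
    have "indicator (atom J) (fst z) = (if J = J0 then 1 else 0 :: real)" if "J \<in> Pow {..<N}" for J
      using that unfolding atom_def J0_def indicator_def by auto
    then have "(\<Sum>J\<in>Pow {..<N}. indicator (atom J) (fst z) * indicator (\<Union>i\<in>J. Q i) (snd z) :: real)
        = (\<Sum>J\<in>Pow {..<N}. if J = J0 then indicator (\<Union>i\<in>J0. Q i) (snd z) else 0)"
      by (intro sum.cong) auto
    also have "\<dots> = indicator (\<Union>i\<in>J0. Q i) (snd z)"
      unfolding J0_def by auto
    also have "\<dots> = indicator (\<Union>i<N. V i \<times> Q i) z"
      unfolding J0_def by (cases z) (auto split: split_indicator)
    finally show "indicator (\<Union>i<N. V i \<times> Q i) z
        = (\<Sum>J\<in>Pow {..<N}. indicator (atom J) (fst z) * indicator (\<Union>i\<in>J. Q i) (snd z) :: real)"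
      by simp
  qed
  show ?thesis
    unfolding decomp
  proof (rule liminf_integral_ge_sum)
    show "liminf_integral_ge \<rho>s \<rho> (\<lambda>z. indicator (atom J) (fst z) * indicator (\<Union>i\<in>J. Q i) (snd z))" for J
      by (rule liminf_integral_ge_box[OF atom_borel]) (rule open_UN, simp add: Q)
  qed simp
qed

lemma liminf_integral_ge_open:
  assumes U: "open U"
  shows "liminf_integral_ge \<rho>s \<rho> (indicator U)"
proof -
  obtain V :: "nat \<Rightarrow> 'x set" and Q :: "nat \<Rightarrow> 'y set"
    where VQ: "\<And>i. open (V i)" "\<And>i. open (Q i)" and U_eq: "U = (\<Union>i. V i \<times> Q i)"
    by (metis open_prod_eq_UN_Times[OF U])
  define W :: "nat \<Rightarrow> 'x \<times> 'y \<Rightarrow> real" where "W N = indicator (\<Union>i<N. V i \<times> Q i)" for N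
  have measurable: "W N \<in> borel_measurable borel" "(indicator U :: _ \<Rightarrow> real) \<in> borel_measurable borel" for N
  proof -
    have "open (\<Union>i<N. V i \<times> Q i)" by (rule open_UN) (simp add: open_Times VQ)
    then show "W N \<in> borel_measurable borel"
      unfolding W_def by (intro borel_measurable_indicator borel_open)
    show "(indicator U :: _ \<Rightarrow> real) \<in> borel_measurable borel"
      by (intro borel_measurable_indicator borel_open U)
  qed
  have bounded: "\<bar>W N z\<bar> \<le> 1" "\<bar>indicator U z :: real\<bar> \<le> 1" for N z
    unfolding W_def by (simp_all add: indicator_def)
  have lim: "(\<lambda>N. \<integral>z. W N z \<partial>\<rho>) \<longlonglongrightarrow> (\<integral>z. indicator U z \<partial>\<rho>)"
  proof (rule tendsto_integral_bounded_convergence[OF borel_prob_lim measurable bounded(1)])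
    show "(\<lambda>N. W N z) \<longlonglongrightarrow> indicator U z" for z
      unfolding W_def U_eq by (rule LIMSEQ_indicator_UN)
  qed
  show ?thesis
  proof (rule liminf_integral_ge_approx_below)
    fix e :: real assume "e > 0"
    obtain N where "norm ((\<integral>z. W N z \<partial>\<rho>) - (\<integral>z. indicator U z \<partial>\<rho>)) < e"
      using LIMSEQ_D[OF lim \<open>e > 0\<close>] by (blast intro: order_refl)
    then have "(\<integral>z. indicator U z \<partial>\<rho>) - e < (\<integral>z. W N z \<partial>\<rho>)"
      by (simp add: abs_less_iff)
    moreover have "(\<integral>z. W N z \<partial>\<rho>s n) \<le> (\<integral>z. indicator U z \<partial>\<rho>s n)" for n
      by (rule integral_mono[OF integrable_bounded(1)[OF measurable(1) bounded(1)]
            integrable_bounded(1)[OF measurable(2) bounded(2)]])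
        (auto simp: W_def U_eq split: split_indicator)
    moreover have "liminf_integral_ge \<rho>s \<rho> (W N)"
      unfolding W_def by (rule liminf_integral_ge_finite_union_boxes[OF VQ])
    ultimately show "\<exists>s. liminf_integral_ge \<rho>s \<rho> s \<and> (\<forall>n. (\<integral>z. s z \<partial>\<rho>s n) \<le> (\<integral>z. indicator U z \<partial>\<rho>s n))
        \<and> (\<integral>z. indicator U z \<partial>\<rho>) - e < (\<integral>z. s z \<partial>\<rho>)"
      by blast
  qed (fact integrable_bounded[OF measurable(2) bounded(2)])+
qed

lemma staircase_below_continuous:
  fixes h :: "'x \<times> 'y \<Rightarrow> real" and k :: nat
  assumes h: "continuous_on UNIV h" "\<And>z. 0 \<le> h z" "\<And>z. h z \<le> B" and k: "k > 0"
  obtains s where "liminf_integral_ge \<rho>s \<rho> s" "\<And>z. h z - 1 / real k \<le> s z" "\<And>z. s z \<le> h z"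
proof -
  define L where "L = nat \<lceil>B * real k\<rceil>"
  have "B \<le> real L / real k"
    using real_nat_ceiling_ge[of "B * real k"] k by (simp add: L_def field_simps)
  define s where "s z = (\<Sum>j=1..L. (1 / real k) * indicator {z. real j / real k < h z} z)" for z
  have s_eq: "s z = (\<Sum>j=1..L. if real j / real k < h z then 1 / real k else 0)" for z
    unfolding s_def by (intro sum.cong) (auto simp: indicator_def)
  have "liminf_integral_ge \<rho>s \<rho> (\<lambda>z. (1 / real k) * indicator {z. real j / real k < h z} z)" for j
    using k by (intro liminf_integral_ge_cmult liminf_integral_ge_open
        open_Collect_less[OF continuous_on_const h(1)]) simp
  then have "liminf_integral_ge \<rho>s \<rho> s"
    unfolding s_def[abs_def] by (rule liminf_integral_ge_sum[rotated]) simp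
  moreover have "h z - 1 / real k \<le> s z" "s z \<le> h z" for z
    unfolding s_eq using staircase_approx[of "real k" "h z" L] k h(2,3)[of z] \<open>B \<le> real L / real k\<close>
    by auto
  ultimately show ?thesis by (rule that)
qed

lemma liminf_integral_ge_continuous_nonneg:
  fixes h :: "'x \<times> 'y \<Rightarrow> real"
  assumes h: "continuous_on UNIV h" "\<And>z. 0 \<le> h z" "\<And>z. h z \<le> B"
  shows "liminf_integral_ge \<rho>s \<rho> h"
proof -
  have "h \<in> borel_measurable borel" using h(1) by (rule borel_measurable_continuous_onI)
  moreover have "\<bar>h z\<bar> \<le> B" for z using h(2,3)[of z] by simp
  ultimately have h_int: "integrable (\<rho>s n) h" "integrable \<rho> h" for n
    by (rule integrable_bounded)+
  show ?thesis
  proof (rule liminf_integral_ge_approx_below[OF h_int])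
    fix e :: real assume "e > 0"
    then obtain k :: nat where k: "k > 0" "1 / real k < e"
      using ex_inverse_of_nat_less by (auto simp: inverse_eq_divide)
    obtain s where s: "liminf_integral_ge \<rho>s \<rho> s" "\<And>z. h z - 1 / real k \<le> s z" "\<And>z. s z \<le> h z"
      using staircase_below_continuous[OF h k(1)] by blast
    then have s_int: "integrable (\<rho>s n) s" "integrable \<rho> s" for n
      unfolding liminf_integral_ge_def by auto
    have const_int: "integrable \<rho> (\<lambda>_. 1 / real k)"
      by (rule integrable_bounded(2)[of _ "1 / real k"]) auto
    have "(\<integral>z. h z \<partial>\<rho>) - 1 / real k = (\<integral>z. h z - 1 / real k \<partial>\<rho>)"
      by (simp only: Bochner_Integration.integral_diff[OF h_int(2) const_int]
          integral_const_borel_prob[OF borel_prob_lim])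
    also have "\<dots> \<le> (\<integral>z. s z \<partial>\<rho>)"
      using s(2) by (intro integral_mono Bochner_Integration.integrable_diff h_int(2) const_int s_int(2))
    finally have "(\<integral>z. h z \<partial>\<rho>) - e < (\<integral>z. s z \<partial>\<rho>)" using k(2) by linarith
    moreover have "(\<integral>z. s z \<partial>\<rho>s n) \<le> (\<integral>z. h z \<partial>\<rho>s n)" for n
      using s_int(1) h_int(1) s(3) by (rule integral_mono)
    ultimately show "\<exists>s. liminf_integral_ge \<rho>s \<rho> s \<and> (\<forall>n. (\<integral>z. s z \<partial>\<rho>s n) \<le> (\<integral>z. h z \<partial>\<rho>s n))
        \<and> (\<integral>z. h z \<partial>\<rho>) - e < (\<integral>z. s z \<partial>\<rho>)"
      using s(1) by blast
  qed
qed

theorem weak_star_conv_if_stable: "weak_star_conv \<rho>s \<rho>"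
  unfolding weak_star_conv_def
proof (intro allI impI)
  fix f :: "'x \<times> 'y \<Rightarrow> real" assume f: "continuous_on UNIV f \<and> bounded (range f)"
  obtain K where K: "\<And>z. \<bar>f z\<bar> \<le> K" using f bounded_range_real_abs_le by blast
  have fm: "f \<in> borel_measurable borel" using f borel_measurable_continuous_onI by blast
  have shift: "(\<integral>z. K + f z \<partial>N) = K + (\<integral>z. f z \<partial>N)" "(\<integral>z. K - f z \<partial>N) = K - (\<integral>z. f z \<partial>N)"
    if N: "borel_prob N" for N
  proof -
    have "integrable N f" "integrable N (\<lambda>_. K)"
      using integrable_borel_prob_bounded[OF N fm K] integrable_borel_prob_bounded[OF N, of "\<lambda>_. K" "\<bar>K\<bar>"]
      by auto
    then show "(\<integral>z. K + f z \<partial>N) = K + (\<integral>z. f z \<partial>N)" "(\<integral>z. K - f z \<partial>N) = K - (\<integral>z. f z \<partial>N)"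
      using integral_const_borel_prob[OF N, of K] by simp_all
  qed
  have bounds: "0 \<le> K + f z" "K + f z \<le> 2 * K" "0 \<le> K - f z" "K - f z \<le> 2 * K" for z
    using K[of z] by (auto simp: abs_le_iff)
  \<comment> \<open>lower bounds for \<open>K + f\<close> and \<open>K - f\<close> are lower and upper bounds for \<open>f\<close>\<close>
  have "liminf_integral_ge \<rho>s \<rho> (\<lambda>z. K + f z)"
    using f by (intro liminf_integral_ge_continuous_nonneg[where B="2 * K"] continuous_intros bounds) auto
  moreover have "liminf_integral_ge \<rho>s \<rho> (\<lambda>z. K - f z)"
    using f by (intro liminf_integral_ge_continuous_nonneg[where B="2 * K"] continuous_intros bounds) auto
  ultimately have ev: "eventually (\<lambda>n. (\<integral>z. K + f z \<partial>\<rho>s n) > (\<integral>z. K + f z \<partial>\<rho>) - e \<and>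
      (\<integral>z. K - f z \<partial>\<rho>s n) > (\<integral>z. K - f z \<partial>\<rho>) - e) sequentially" if "e > 0" for e
    using that unfolding liminf_integral_ge_def by (intro eventually_conj) blast+
  show "(\<lambda>n. \<integral>z. f z \<partial>\<rho>s n) \<longlonglongrightarrow> (\<integral>z. f z \<partial>\<rho>)"
  proof (rule tendstoI)
    fix e :: real assume "e > 0"
    from ev[OF this] show "eventually (\<lambda>n. dist (\<integral>z. f z \<partial>\<rho>s n) (\<integral>z. f z \<partial>\<rho>) < e) sequentially"
    proof eventually_elim
      case (elim n)
      then show ?case
        using shift[OF borel_prob_seq[of n]] shift[OF borel_prob_lim] by (simp add: dist_real_def abs_less_iff)
    qed
  qed
qed

end

section \<open>Weak-* limits\<close>

lemma borel_prob_eqI_integral_continuous: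
  fixes P Q :: "'a::metric_space measure"
  assumes P: "borel_prob P" and Q: "borel_prob Q"
    and eq: "\<And>u::'a \<Rightarrow> real. continuous_on UNIV u \<Longrightarrow> bounded (range u) \<Longrightarrow> (\<integral>x. u x \<partial>P) = (\<integral>x. u x \<partial>Q)"
  shows "P = Q"
proof -
  interpret P: prob_space P using borel_probD(1)[OF P] .
  interpret Q: prob_space Q using borel_probD(1)[OF Q] .
  have "measure P U = measure Q U" if U: "open U" for U
  proof -
    obtain g :: "nat \<Rightarrow> 'a \<Rightarrow> real" where g: "\<And>k. continuous_on UNIV (g k)" "\<And>k x. \<bar>g k x\<bar> \<le> 1"
      "\<And>x. (\<lambda>k. g k x) \<longlonglongrightarrow> indicator U x"
      using open_indicator_continuous_approx[OF U] by metis
    have measurable: "g k \<in> borel_measurable borel" "(indicator U :: _ \<Rightarrow> real) \<in> borel_measurable borel" for k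
      using g(1) U by (auto intro: borel_measurable_continuous_onI)
    have "bounded (range (g k))" for k using g(2) by (intro boundedI[where B=1]) auto
    then have "(\<lambda>k. \<integral>x. g k x \<partial>P) \<longlonglongrightarrow> measure Q U"
      using tendsto_integral_bounded_convergence[OF Q measurable g(2,3)] eq[OF g(1)]
      by (simp add: integral_indicator_borel_prob[OF Q] borel_probD(3)[OF Q])
    moreover have "(\<lambda>k. \<integral>x. g k x \<partial>P) \<longlonglongrightarrow> measure P U"
      using tendsto_integral_bounded_convergence[OF P measurable g(2,3)]
      by (simp add: integral_indicator_borel_prob[OF P] borel_probD(3)[OF P])
    ultimately show ?thesis by (rule LIMSEQ_unique[rotated])
  qed
  then show ?thesis
    using borel_probD(2)[OF P] borel_probD(2)[OF Q]
    by (intro measure_eqI_generator_eq[where E="{S. open S}" and \<Omega>=UNIV and A="\<lambda>_. UNIV"])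
      (auto simp: Int_stable_def sets_borel P.emeasure_eq_measure Q.emeasure_eq_measure)
qed

lemma marg1_eq_if_weak_star_conv:
  fixes \<nu>s :: "nat \<Rightarrow> ('a::polish_space \<times> 'c::polish_space) measure"
  assumes \<nu>s: "\<And>n. borel_prob (\<nu>s n)" and \<nu>: "borel_prob \<nu>" and M: "borel_prob M"
    and marg: "\<And>n. marg1 (\<nu>s n) = M" and conv: "weak_star_conv \<nu>s \<nu>"
  shows "marg1 \<nu> = M"
proof (rule borel_prob_eqI_integral_continuous[OF borel_prob_marg1[OF \<nu>] M])
  fix u :: "'a \<Rightarrow> real" assume u: "continuous_on UNIV u" "bounded (range u)"
  have um: "u \<in> borel_measurable borel" using u(1) by (rule borel_measurable_continuous_onI)
  have "continuous_on UNIV (\<lambda>z::'a \<times> 'c. u (fst z))"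
    by (rule continuous_on_compose2[OF u(1) continuous_on_fst[OF continuous_on_id]]) auto
  moreover have "bounded (range (\<lambda>z::'a \<times> 'c. u (fst z)))"
    using u(2) by (rule bounded_subset) auto
  ultimately have "(\<lambda>n. \<integral>z. u (fst z) \<partial>\<nu>s n) \<longlonglongrightarrow> (\<integral>z. u (fst z) \<partial>\<nu>)"
    using conv unfolding weak_star_conv_def by blast
  moreover have "(\<integral>z. u (fst z) \<partial>\<nu>s n) = (\<integral>x. u x \<partial>M)" for n
    using integral_marg1[OF \<nu>s um] marg by simp
  ultimately show "(\<integral>x. u x \<partial>marg1 \<nu>) = (\<integral>x. u x \<partial>M)"
    using integral_marg1[OF \<nu> um] by (simp add: LIMSEQ_const_iff)
qed

lemma weak_star_conv_if_weak_star_conv_distr: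
  fixes T :: "'a::topological_space \<Rightarrow> 'b::topological_space"
  assumes conv: "weak_star_conv (\<lambda>n. distr (Ms n) borel T) (distr M borel T)"
    and Ms: "\<And>n. borel_prob (Ms n)" and M: "borel_prob M"
    and T: "T \<in> measurable borel borel" and T': "continuous_on UNIV T'" "\<And>x. T' (T x) = x"
  shows "weak_star_conv Ms M"
  unfolding weak_star_conv_def
proof (intro allI impI)
  fix f :: "'a \<Rightarrow> real" assume f: "continuous_on UNIV f \<and> bounded (range f)"
  have "continuous_on UNIV (\<lambda>y. f (T' y))"
    using f T'(1) by (intro continuous_on_compose2[of UNIV f UNIV T']) auto
  moreover have "bounded (range (\<lambda>y. f (T' y)))"
    using f by (rule bounded_subset[OF conjunct2]) auto
  ultimately have "(\<lambda>n. \<integral>y. f (T' y) \<partial>distr (Ms n) borel T) \<longlonglongrightarrow> (\<integral>y. f (T' y) \<partial>distr M borel T)"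
    using conv unfolding weak_star_conv_def by blast
  moreover have "(\<integral>y. f (T' y) \<partial>distr N borel T) = (\<integral>x. f x \<partial>N)" if "borel_prob N" for N
    using \<open>continuous_on UNIV (\<lambda>y. f (T' y))\<close> T'(2)
    by (subst integral_distr[OF measurable_borel_prob[OF that T]]) (auto intro: borel_measurable_continuous_onI)
  ultimately show "(\<lambda>n. \<integral>x. f x \<partial>Ms n) \<longlonglongrightarrow> (\<integral>x. f x \<partial>M)"
    using Ms M by simp
qed

section \<open>Gluing along a conditional distribution\<close>

definition prob_kernel :: "('a::topological_space \<Rightarrow> 'b::topological_space measure) \<Rightarrow> bool" where
  "prob_kernel \<kappa> \<longleftrightarrow> (\<forall>a. borel_prob (\<kappa> a)) \<and>
     (\<forall>B\<in>sets borel. (\<lambda>a. measure (\<kappa> a) B) \<in> borel_measurable borel)"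

lemma prob_kernel_if_regular_cond_distr: "regular_cond_distr \<mu> \<kappa> \<Longrightarrow> prob_kernel \<kappa>"
  unfolding regular_cond_distr_def prob_kernel_def by blast

lemma prob_kernel_measurable:
  "prob_kernel \<kappa> \<Longrightarrow> B \<in> sets borel \<Longrightarrow> (\<lambda>a. measure (\<kappa> a) B) \<in> borel_measurable borel"
  unfolding prob_kernel_def by blast

lemma prob_kernel_measure_le_1: "prob_kernel \<kappa> \<Longrightarrow> 0 \<le> measure (\<kappa> a) B \<and> measure (\<kappa> a) B \<le> 1"
  unfolding prob_kernel_def using prob_space.prob_le_1 borel_probD(1) by auto

lemma Times_in_sets_borel:
  "A \<in> sets borel \<Longrightarrow> B \<in> sets borel \<Longrightarrow>
    A \<times> B \<in> sets (borel :: ('a::second_countable_topology \<times> 'b::second_countable_topology) measure)"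
  using borel_prod[where 'a='a and 'b='b] by (metis pair_measureI)

lemma sets_borel_prod_eq_sigma_rectangles:
  "sets (borel :: ('a::second_countable_topology \<times> 'b::second_countable_topology) measure)
    = sigma_sets UNIV {A \<times> B | A B. A \<in> sets (borel :: 'a measure) \<and> B \<in> sets (borel :: 'b measure)}"
  using sets_pair_measure[of "borel :: 'a measure" "borel :: 'b measure"] unfolding borel_prod by simp

lemma emeasure_distr_density:
  fixes d :: "'a \<Rightarrow> real"
  assumes "T \<in> measurable M borel" "d \<in> borel_measurable M" "C \<in> sets borel"
  shows "emeasure (distr (density M d) borel T) C = (\<integral>\<^sup>+x. ennreal (d x) * indicator C (T x) \<partial>M)"
proof -
  have "emeasure (distr (density M d) borel T) C = (\<integral>\<^sup>+x. ennreal (d x) * indicator (T -` C \<inter> space M) x \<partial>M)"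
    using assms by (simp add: emeasure_distr emeasure_density measurable_sets)
  also have "\<dots> = (\<integral>\<^sup>+x. ennreal (d x) * indicator C (T x) \<partial>M)"
    by (rule nn_integral_cong) (simp add: indicator_def)
  finally show ?thesis .
qed

lemma integral_distr_density:
  fixes d :: "'a \<Rightarrow> real" and u :: "'c::topological_space \<Rightarrow> real"
  assumes "T \<in> measurable M borel" "d \<in> borel_measurable M" "\<And>x. 0 \<le> d x" "u \<in> borel_measurable borel"
  shows "(\<integral>c. u c \<partial>distr (density M d) borel T) = (\<integral>x. d x * u (T x) \<partial>M)"
  using assms by (simp add: integral_distr integral_density)

text \<open>The defining property of the gluing, read as an equality of two finite measures on the
  third factor.\<close>
lemma distr_density_glue_eq:
  fixes \<kappa> :: "'a::polish_space \<Rightarrow> 'b::polish_space measure" and \<nu> :: "('a \<times> 'c::polish_space) measure"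
    and \<phi> :: "('a \<times> 'b \<times> 'c) measure"
  assumes \<kappa>: "prob_kernel \<kappa>" and \<nu>: "borel_prob \<nu>" and glue: "is_glue \<kappa> \<nu> \<phi>"
    and A: "A \<in> sets borel" and B: "B \<in> sets borel"
  shows "distr (density \<phi> (\<lambda>w. ennreal (indicator (A \<times> B \<times> UNIV) w))) borel (\<lambda>w. snd (snd w))
       = distr (density \<nu> (\<lambda>x. ennreal (indicator A (fst x) * measure (\<kappa> (fst x)) B))) borel snd"
    (is "distr (density \<phi> (\<lambda>w. ennreal (?d1 w))) _ _ = distr (density \<nu> (\<lambda>x. ennreal (?d2 x))) _ _")
proof (rule measure_eqI)
  have \<phi>: "borel_prob \<phi>" using glue unfolding is_glue_def by simp
  interpret \<phi>: prob_space \<phi> using borel_probD(1)[OF \<phi>] .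
  have d2_borel: "?d2 \<in> borel_measurable borel"
    using A prob_kernel_measurable[OF \<kappa> B] by (intro borel_measurable_times measurable_comp_fst_borel) auto
  have d2_bounds: "0 \<le> ?d2 x" "?d2 x \<le> 1" for x
    using prob_kernel_measure_le_1[OF \<kappa>] by (simp_all add: indicator_def)
  fix C :: "'c set" assume "C \<in> sets (distr (density \<phi> ?d1) borel (\<lambda>w. snd (snd w)))"
  then have C: "C \<in> sets borel" by simp
  have "emeasure (distr (density \<phi> ?d1) borel (\<lambda>w. snd (snd w))) C
      = (\<integral>\<^sup>+w. ennreal (?d1 w) * indicator C (snd (snd w)) \<partial>\<phi>)"
    using A B
    by (intro emeasure_distr_density[OF _ _ C] measurable_borel_prob[OF \<phi>] borel_measurable_indicator
        borel_measurable_continuous_onI continuous_intros) (simp add: borel_probD(2)[OF \<phi>] Times_in_sets_borel)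
  also have "\<dots> = (\<integral>\<^sup>+w. indicator (A \<times> B \<times> C) w \<partial>\<phi>)"
    by (rule nn_integral_cong) (auto simp: indicator_def)
  also have "\<dots> = ennreal (measure \<phi> (A \<times> B \<times> C))"
    using A B C by (simp add: \<phi>.emeasure_eq_measure borel_probD(2)[OF \<phi>] Times_in_sets_borel)
  also have "measure \<phi> (A \<times> B \<times> C) = (\<integral>x. indicator (A \<times> C) x * measure (\<kappa> (fst x)) B \<partial>\<nu>)"
    using glue A B C unfolding is_glue_def set_lebesgue_integral_def by simp
  also have "\<dots> = (\<integral>x. ?d2 x * indicator C (snd x) \<partial>\<nu>)"
    by (rule Bochner_Integration.integral_cong) (auto simp: indicator_def)
  also have "ennreal \<dots> = (\<integral>\<^sup>+x. ennreal (?d2 x * indicator C (snd x)) \<partial>\<nu>)"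
  proof (rule nn_integral_eq_integral[symmetric])
    show "integrable \<nu> (\<lambda>x. ?d2 x * indicator C (snd x))"
      using C d2_bounds
      by (intro integrable_borel_prob_bounded[OF \<nu>, where K=1] borel_measurable_times d2_borel
          measurable_comp_snd_borel borel_measurable_indicator) (auto simp: indicator_def)
  qed (simp add: d2_bounds(1))
  also have "\<dots> = (\<integral>\<^sup>+x. ennreal (?d2 x) * indicator C (snd x) \<partial>\<nu>)"
    by (rule nn_integral_cong) (simp add: indicator_def)
  also have "\<dots> = emeasure (distr (density \<nu> ?d2) borel snd) C"
    using d2_borel C
    by (intro emeasure_distr_density[symmetric] measurable_borel_prob[OF \<nu>] measurable_snd_borel)
  finally show "emeasure (distr (density \<phi> ?d1) borel (\<lambda>w. snd (snd w))) C
      = emeasure (distr (density \<nu> ?d2) borel snd) C" .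
qed simp

lemma integral_glue_rectangle:
  fixes \<kappa> :: "'a::polish_space \<Rightarrow> 'b::polish_space measure" and \<nu> :: "('a \<times> 'c::polish_space) measure"
    and \<phi> :: "('a \<times> 'b \<times> 'c) measure" and u :: "'c \<Rightarrow> real"
  assumes \<kappa>: "prob_kernel \<kappa>" and \<nu>: "borel_prob \<nu>" and glue: "is_glue \<kappa> \<nu> \<phi>"
    and A: "A \<in> sets borel" and B: "B \<in> sets borel" and u: "u \<in> borel_measurable borel"
  shows "(\<integral>w. indicator A (fst w) * indicator B (fst (snd w)) * u (snd (snd w)) \<partial>\<phi>) =
         (\<integral>x. indicator A (fst x) * measure (\<kappa> (fst x)) B * u (snd x) \<partial>\<nu>)"
proof -
  have \<phi>: "borel_prob \<phi>" using glue unfolding is_glue_def by simp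
  define d1 where "d1 w = (indicator (A \<times> B \<times> UNIV) w :: real)" for w :: "'a \<times> 'b \<times> 'c"
  define d2 where "d2 x = indicator A (fst x) * measure (\<kappa> (fst x)) B" for x :: "'a \<times> 'c"
  have third: "(\<lambda>w::'a \<times> 'b \<times> 'c. snd (snd w)) \<in> measurable \<phi> borel"
    by (intro measurable_borel_prob[OF \<phi>] borel_measurable_continuous_onI continuous_intros)
  have "d1 \<in> borel_measurable \<phi>"
    unfolding d1_def using A B
    by (intro borel_measurable_indicator) (simp add: borel_probD(2)[OF \<phi>] Times_in_sets_borel)
  moreover have "0 \<le> d1 w" for w by (simp add: d1_def)
  ultimately have "(\<integral>w. d1 w * u (snd (snd w)) \<partial>\<phi>) = (\<integral>c. u c \<partial>distr (density \<phi> d1) borel (\<lambda>w. snd (snd w)))"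
    by (rule integral_distr_density[OF third _ _ u, symmetric])
  also have "\<dots> = (\<integral>c. u c \<partial>distr (density \<nu> d2) borel snd)"
    unfolding d1_def d2_def using distr_density_glue_eq[OF \<kappa> \<nu> glue A B] by simp
  also have "\<dots> = (\<integral>x. d2 x * u (snd x) \<partial>\<nu>)"
    using A B u prob_kernel_measurable[OF \<kappa> B] prob_kernel_measure_le_1[OF \<kappa>] unfolding d2_def
    by (intro integral_distr_density measurable_borel_prob[OF \<nu>] measurable_snd_borel borel_measurable_times
        measurable_comp_fst_borel borel_measurable_indicator) auto
  finally show ?thesis
    by (simp add: d1_def d2_def indicator_def mem_Times_iff of_bool_conj)
qed

definition reassoc :: "'a \<times> 'b \<times> 'c \<Rightarrow> ('a \<times> 'b) \<times> 'c" where
  "reassoc w = ((fst w, fst (snd w)), snd (snd w))"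

lemma continuous_on_reassoc: "continuous_on UNIV reassoc"
  unfolding reassoc_def[abs_def] by (intro continuous_intros)

lemma measurable_reassoc:
  "reassoc \<in> measurable (borel :: ('a::polish_space \<times> 'b::polish_space \<times> 'c::polish_space) measure) borel"
  by (rule borel_measurable_continuous_onI[OF continuous_on_reassoc])

lemma integral_reassoc_glue_rectangle:
  fixes \<kappa> :: "'a::polish_space \<Rightarrow> 'b::polish_space measure" and \<nu> :: "('a \<times> 'c::polish_space) measure"
    and \<phi> :: "('a \<times> 'b \<times> 'c) measure" and u :: "'c \<Rightarrow> real"
  assumes \<kappa>: "prob_kernel \<kappa>" and \<nu>: "borel_prob \<nu>" and glue: "is_glue \<kappa> \<nu> \<phi>"
    and A: "A \<in> sets borel" and B: "B \<in> sets borel" and u: "u \<in> borel_measurable borel"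
  shows "(\<integral>z. indicator (A \<times> B) (fst z) * u (snd z) \<partial>distr \<phi> borel reassoc) =
         (\<integral>x. indicator A (fst x) * measure (\<kappa> (fst x)) B * u (snd x) \<partial>\<nu>)"
proof -
  have \<phi>: "borel_prob \<phi>" using glue unfolding is_glue_def by simp
  have "(\<lambda>z::('a \<times> 'b) \<times> 'c. indicator (A \<times> B) (fst z) * u (snd z)) \<in> borel_measurable borel"
    using A B u
    by (intro borel_measurable_times measurable_comp_fst_borel measurable_comp_snd_borel
        borel_measurable_indicator Times_in_sets_borel)
  then have "(\<integral>z. indicator (A \<times> B) (fst z) * u (snd z) \<partial>distr \<phi> borel reassoc) =
      (\<integral>w. indicator A (fst w) * indicator B (fst (snd w)) * u (snd (snd w)) \<partial>\<phi>)"
    by (simp add: integral_distr[OF measurable_borel_prob[OF \<phi> measurable_reassoc]] reassoc_def indicator_times)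
  also have "\<dots> = (\<integral>x. indicator A (fst x) * measure (\<kappa> (fst x)) B * u (snd x) \<partial>\<nu>)"
    by (rule integral_glue_rectangle[OF \<kappa> \<nu> glue A B u])
  finally show ?thesis .
qed

lemma marg1_reassoc_glue:
  fixes \<kappa> :: "'a::polish_space \<Rightarrow> 'b::polish_space measure" and \<nu> :: "('a \<times> 'c::polish_space) measure"
    and \<phi> :: "('a \<times> 'b \<times> 'c) measure" and \<mu> :: "('a \<times> 'b) measure"
  assumes \<nu>: "borel_prob \<nu>" and glue: "is_glue \<kappa> \<nu> \<phi>" and \<mu>: "borel_prob \<mu>"
    and cond: "regular_cond_distr \<mu> \<kappa>" and marg: "marg1 \<nu> = marg1 \<mu>"
  shows "marg1 (distr \<phi> borel reassoc) = \<mu>"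
proof -
  have \<kappa>: "prob_kernel \<kappa>" by (rule prob_kernel_if_regular_cond_distr[OF cond])
  have \<rho>: "borel_prob (distr \<phi> borel reassoc)"
    using glue unfolding is_glue_def by (intro borel_prob_distr measurable_reassoc) simp
  let ?R = "{A \<times> B | A B. A \<in> sets (borel :: 'a measure) \<and> B \<in> sets (borel :: 'b measure)}"
  have rectangle: "measure (marg1 (distr \<phi> borel reassoc)) (A \<times> B) = measure \<mu> (A \<times> B)"
    if A: "A \<in> sets borel" and B: "B \<in> sets borel" for A B
  proof -
    have "measure (marg1 (distr \<phi> borel reassoc)) (A \<times> B)
        = (\<integral>z. indicator (A \<times> B) (fst z) * 1 \<partial>distr \<phi> borel reassoc)"
      using A B integral_indicator_borel_prob[OF borel_prob_marg1[OF \<rho>], of "A \<times> B"]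
        integral_marg1[OF \<rho> borel_measurable_indicator[OF Times_in_sets_borel[OF A B]]]
      by simp
    also have "\<dots> = (\<integral>x. indicator A (fst x) * measure (\<kappa> (fst x)) B * 1 \<partial>\<nu>)"
      by (rule integral_reassoc_glue_rectangle[OF \<kappa> \<nu> glue A B]) simp
    also have "\<dots> = (\<integral>a. indicator A a * measure (\<kappa> a) B \<partial>marg1 \<nu>)"
      using A prob_kernel_measurable[OF \<kappa> B]
      by (simp add: integral_marg1[OF \<nu>] borel_measurable_times)
    also have "\<dots> = measure \<mu> (A \<times> B)"
      using cond A B marg unfolding regular_cond_distr_def set_lebesgue_integral_def by simp
    finally show ?thesis .
  qed
  show ?thesis
  proof (rule measure_eqI_generator_eq[where E="?R" and \<Omega>=UNIV and A="\<lambda>_. UNIV"])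
    show "Int_stable ?R" by (rule Int_stable_pair_measure_generator)
    show "sets (marg1 (distr \<phi> borel reassoc)) = sigma_sets UNIV ?R" "sets \<mu> = sigma_sets UNIV ?R"
      using borel_probD(2)[OF borel_prob_marg1[OF \<rho>]] borel_probD(2)[OF \<mu>]
      by (simp_all add: sets_borel_prod_eq_sigma_rectangles)
    show "emeasure (marg1 (distr \<phi> borel reassoc)) X = emeasure \<mu> X" if "X \<in> ?R" for X
      using that rectangle borel_probD(1)[OF borel_prob_marg1[OF \<rho>]] borel_probD(1)[OF \<mu>]
      by (auto simp: finite_measure.emeasure_eq_measure prob_space_def)
    show "range (\<lambda>_. UNIV) \<subseteq> ?R" by (auto intro!: exI[of _ UNIV])
    show "emeasure (marg1 (distr \<phi> borel reassoc)) UNIV \<noteq> \<infinity>"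
      using prob_space.emeasure_space_1[OF borel_probD(1)[OF borel_prob_marg1[OF \<rho>]]]
        borel_probD(3)[OF borel_prob_marg1[OF \<rho>]] by simp
  qed auto
qed

lemma stable_conv_for_reassoc_glue_rectangle:
  fixes \<kappa> :: "'a::polish_space \<Rightarrow> 'b::polish_space measure" and \<nu>s :: "nat \<Rightarrow> ('a \<times> 'c::polish_space) measure"
  assumes \<kappa>: "prob_kernel \<kappa>" and \<nu>s: "\<And>n. borel_prob (\<nu>s n)" and \<nu>: "borel_prob \<nu>"
    and glues: "\<And>n. is_glue \<kappa> (\<nu>s n) (\<phi>s n)" and glue: "is_glue \<kappa> \<nu> \<phi>"
    and A: "A \<in> sets borel" and B: "B \<in> sets borel"
    and stable: "stable_conv_for \<nu>s \<nu> (\<lambda>a. indicator A a * measure (\<kappa> a) B)"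
  shows "stable_conv_for (\<lambda>n. distr (\<phi>s n) borel reassoc) (distr \<phi> borel reassoc) (indicator (A \<times> B))"
  unfolding stable_conv_for_def
proof (intro allI impI)
  fix u :: "'c \<Rightarrow> real" assume u: "continuous_on UNIV u \<and> bounded (range u)"
  then have "u \<in> borel_measurable borel" using borel_measurable_continuous_onI by blast
  then show "(\<lambda>n. \<integral>z. indicator (A \<times> B) (fst z) * u (snd z) \<partial>distr (\<phi>s n) borel reassoc)
      \<longlonglongrightarrow> (\<integral>z. indicator (A \<times> B) (fst z) * u (snd z) \<partial>distr \<phi> borel reassoc)"
    using stable u unfolding stable_conv_for_def
    by (simp add: integral_reassoc_glue_rectangle[OF \<kappa> \<nu>s glues A B] integral_reassoc_glue_rectangle[OF \<kappa> \<nu> glue A B])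
qed

lemma stable_convergence_reassoc_glue:
  fixes \<mu> :: "('a::polish_space \<times> 'b::polish_space) measure"
    and \<nu>s :: "nat \<Rightarrow> ('a \<times> 'c::polish_space) measure" and \<nu> :: "('a \<times> 'c) measure"
    and \<phi>s :: "nat \<Rightarrow> ('a \<times> 'b \<times> 'c) measure" and \<phi> :: "('a \<times> 'b \<times> 'c) measure"
  assumes \<mu>: "borel_prob \<mu>" and \<nu>s: "\<And>n. borel_prob (\<nu>s n)" and \<nu>: "borel_prob \<nu>"
    and marg_seq: "\<And>n. marg1 (\<nu>s n) = marg1 \<mu>" and marg_lim: "marg1 \<nu> = marg1 \<mu>"
    and conv: "weak_star_conv \<nu>s \<nu>" and cond: "regular_cond_distr \<mu> \<kappa>"
    and glues: "\<And>n. is_glue \<kappa> (\<nu>s n) (\<phi>s n)" and glue: "is_glue \<kappa> \<nu> \<phi>"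
  shows "stable_convergence (\<lambda>n. distr (\<phi>s n) borel reassoc) (distr \<phi> borel reassoc)"
proof -
  have \<kappa>: "prob_kernel \<kappa>" by (rule prob_kernel_if_regular_cond_distr[OF cond])
  interpret \<nu>: fixed_marginal \<nu>s \<nu> "marg1 \<mu>"
    using \<nu>s \<nu> marg_seq marg_lim by unfold_locales
  interpret \<rho>: fixed_marginal "\<lambda>n. distr (\<phi>s n) borel reassoc" "distr \<phi> borel reassoc" \<mu>
    using glues glue marg1_reassoc_glue[OF \<nu>s glues \<mu> cond marg_seq] marg1_reassoc_glue[OF \<nu> glue \<mu> cond marg_lim]
    by unfold_locales (auto simp: is_glue_def intro: borel_prob_distr measurable_reassoc)
  have rectangle: "stable_conv_for (\<lambda>n. distr (\<phi>s n) borel reassoc) (distr \<phi> borel reassoc) (indicator (A \<times> B))"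
    if A: "A \<in> sets borel" and B: "B \<in> sets borel" for A B
  proof (rule stable_conv_for_reassoc_glue_rectangle[OF \<kappa> \<nu>s \<nu> glues glue A B])
    show "stable_conv_for \<nu>s \<nu> (\<lambda>a. indicator A a * measure (\<kappa> a) B)"
      using A prob_kernel_measurable[OF \<kappa> B] prob_kernel_measure_le_1[OF \<kappa>]
      by (intro \<nu>.stable_conv_for_integrable_if_weak_star_conv[OF conv] \<nu>.integrable_M_bounded[where K=1]
          borel_measurable_times) (auto simp: indicator_def)
  qed
  show ?thesis
  proof
    show "stable_conv_for (\<lambda>n. distr (\<phi>s n) borel reassoc) (distr \<phi> borel reassoc) (indicator E)"
      if "E \<in> sets borel" for E
      by (rule \<rho>.stable_conv_for_sets[OF Int_stable_pair_measure_generator sets_borel_prod_eq_sigma_rectangles _ _ that])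
        (auto intro!: exI[of _ UNIV] rectangle)
  qed (fact \<rho>.borel_prob_seq \<rho>.borel_prob_lim)+
qed

theorem corollary4:
  fixes \<mu> :: "('a::polish_space \<times> 'b::polish_space) measure"
    and \<nu>s :: "nat \<Rightarrow> ('a \<times> 'c::polish_space) measure"
    and \<nu> :: "('a \<times> 'c) measure"
    and \<kappa> :: "'a \<Rightarrow> 'b measure"
    and \<phi>s :: "nat \<Rightarrow> ('a \<times> 'b \<times> 'c) measure"
    and \<phi> :: "('a \<times> 'b \<times> 'c) measure"
  assumes "borel_prob \<mu>"
    and "\<And>n. borel_prob (\<nu>s n)"
    and "borel_prob \<nu>"
    and "\<And>n. marg1 (\<nu>s n) = marg1 \<mu>"
    and "weak_star_conv \<nu>s \<nu>"
    and "regular_cond_distr \<mu> \<kappa>"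
    and "\<And>n. is_glue \<kappa> (\<nu>s n) (\<phi>s n)"
    and "is_glue \<kappa> \<nu> \<phi>"
  shows "weak_star_conv \<phi>s \<phi>"
proof -
  have "marg1 \<nu> = marg1 \<mu>"
    by (rule marg1_eq_if_weak_star_conv[OF assms(2,3) borel_prob_marg1[OF assms(1)] assms(4,5)])
  then have "stable_convergence (\<lambda>n. distr (\<phi>s n) borel reassoc) (distr \<phi> borel reassoc)"
    by (rule stable_convergence_reassoc_glue[OF assms(1-4) _ assms(5-8)])
  then have "weak_star_conv (\<lambda>n. distr (\<phi>s n) borel reassoc) (distr \<phi> borel reassoc)"
    by (rule stable_convergence.weak_star_conv_if_stable)
  moreover have "borel_prob (\<phi>s n)" "borel_prob \<phi>" for n
    using assms(7,8) unfolding is_glue_def by auto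
  ultimately show ?thesis
    by (rule weak_star_conv_if_weak_star_conv_distr[OF _ _ _ measurable_reassoc,
          where T'="\<lambda>z. (fst (fst z), snd (fst z), snd z)"])
      (auto simp: reassoc_def intro!: continuous_intros)
qed

end
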